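(* Let $\psi_0:\mathbb{R}\to\mathbb{R}$ be any càdlàg function with $\lim_{|x|\to\infty}x^{-2}\psi_0(x)=0$, and let $\mathbf{r},\mathbf{s},\mathbf{t}$ be as in the context. Then $\mathbf{s}=\mathbf{t}$.
   Context: Write $\bar\psi(y):=\psi_0(y)\vee\psi_0(y-)$. Define $\mathbf{t}:=\inf\{y\ge0: \bar\psi(y-x)-\bar\psi(y)\le\tfrac12x^2 \text{ and } \bar\psi(y+x)-\bar\psi(y)<\tfrac12x^2 \text{ for all } x>0\}$ (equivalently, the first $y\ge0$ with $a(y)=y$, where $a(x)$ is the largest maximizer of $z\mapsto\bar\psi(z)-\tfrac12(z-x)^2$); $\mathbf{r}:=\inf\{y\ge0: \bar\psi(y-x)-\bar\psi(y)\le\tfrac12x^2 \text{ for all } x>0\}$; $\mathbf{s}:=\inf\{y\ge\mathbf{r}: \bar\psi(y+x)-\bar\psi(y)<\tfrac12x^2 \text{ for all } x>0\}$. *)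

theory Defs
  imports "HOL-Analysis.Analysis"
begin

definition cadlag :: "(real \<Rightarrow> real) \<Rightarrow> bool" where
  "cadlag f \<longleftrightarrow> (\<forall>x. continuous (at_right x) f \<and> (\<exists>l. (f \<longlongrightarrow> l) (at_left x)))"

definition left_lim :: "(real \<Rightarrow> real) \<Rightarrow> real \<Rightarrow> real" where
  "left_lim f y = Lim (at_left y) f"

definition psibar :: "(real \<Rightarrow> real) \<Rightarrow> real \<Rightarrow> real" where
  "psibar f y = max (f y) (left_lim f y)"

text \<open>Infima are taken in the extended reals, so that inf of the empty set is +infinity.\<close>
definition t_pt :: "(real \<Rightarrow> real) \<Rightarrow> ereal" where
  "t_pt f = Inf (ereal ` {y. y \<ge> 0 \<and>
     (\<forall>x>0. psibar f (y - x) - psibar f y \<le> x\<^sup>2 / 2 \<and> psibar f (y + x) - psibar f y < x\<^sup>2 / 2)})"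

definition r_pt :: "(real \<Rightarrow> real) \<Rightarrow> ereal" where
  "r_pt f = Inf (ereal ` {y. y \<ge> 0 \<and>
     (\<forall>x>0. psibar f (y - x) - psibar f y \<le> x\<^sup>2 / 2)})"

definition s_pt :: "(real \<Rightarrow> real) \<Rightarrow> ereal" where
  "s_pt f = Inf (ereal ` {y. ereal y \<ge> r_pt f \<and>
     (\<forall>x>0. psibar f (y + x) - psibar f y < x\<^sup>2 / 2)})"

end

theory Submission
  imports Defs
begin

text \<open>
  Write g for psibar psi0. Call y a left point of g if g(y - x) - g y \<le> x^2/2 for all x > 0,
  and a right point if g(y + x) - g y < x^2/2 for all x > 0. Then t is the infimum of the
  nonnegative points that are both, r the infimum of the nonnegative left points and s the
  infimum of the right points y \<ge> r. Every point counted by t is counted by s, so s \<le> t.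
  Conversely, let y \<ge> r be a right point. Left points form a closed set, so the infimum r is
  attained and there is a left point p with 0 \<le> p \<le> y. The sandwich lemma
  left_right_point_between then yields a point q in [p, y] that is both: q is the largest left
  point in [p, y]; if q were not a right point, a maximiser z > q of g(u) - (u - q)^2/2 on a
  short interval [q, q + x] would be a left point, and z \<le> y contradicts the maximality of q
  while z > y contradicts y being a right point.

  The only analytic property of g that is used is upper semicontinuity (developed first: it
  holds for psibar of a cadlag function, is preserved by subtracting a continuous function, and
  gives maxima on compact intervals).
\<close>

definition usc :: "(real \<Rightarrow> real) \<Rightarrow> bool" where
  "usc g \<longleftrightarrow> (\<forall>x e. e > 0 \<longrightarrow> (\<forall>\<^sub>F u in nhds x. g u < g x + e))"

lemma cadlag_left_lim:
  assumes "cadlag f"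
  shows "(f \<longlongrightarrow> left_lim f x) (at_left x)"
proof -
  obtain l where "(f \<longlongrightarrow> l) (at_left x)"
    using assms unfolding cadlag_def by blast
  then show ?thesis
    unfolding left_lim_def by (simp add: tendsto_Lim)
qed

text \<open>An upper bound for f on an open interval is also an upper bound for psibar f there,
  since left limits inside the interval only see values of f in the interval.\<close>

lemma psibar_le_on_interval:
  assumes "cadlag f" and bound: "\<And>v. a < v \<Longrightarrow> v < b \<Longrightarrow> f v \<le> c"
    and u: "a < u" "u < b"
  shows "psibar f u \<le> c"
proof -
  have "left_lim f u \<le> c"
  proof (rule tendsto_upperbound[OF cadlag_left_lim[OF assms(1)]])
    show "\<forall>\<^sub>F v in at_left u. f v \<le> c"
      using eventually_at_left_real[OF u(1)] by eventually_elim (use bound u in auto)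
  qed simp
  then show ?thesis
    using bound u unfolding psibar_def by simp
qed

text \<open>psibar f = max f (left limit of f) is upper semicontinuous for cadlag f: right of x it
  is close to at most f x, left of x it is close to at most the left limit at x.\<close>

lemma usc_psibar:
  assumes f: "cadlag f"
  shows "usc (psibar f)"
  unfolding usc_def
proof (intro allI impI)
  fix x e :: real
  assume e: "e > 0"
  have "(f \<longlongrightarrow> f x) (at_right x)"
    using f unfolding cadlag_def continuous_within by blast
  then have "\<forall>\<^sub>F v in at_right x. f v < f x + e / 2"
    using e by (intro order_tendstoD) auto
  then obtain b where b: "b > x" "\<And>v. x < v \<Longrightarrow> v < b \<Longrightarrow> f v < f x + e / 2"
    unfolding eventually_at_right_field by blast
  have "\<forall>\<^sub>F u in at_right x. psibar f u < psibar f x + e"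
    unfolding eventually_at_right_field
  proof (intro exI[of _ b] conjI allI impI)
    fix u assume "x < u" "u < b"
    then have "psibar f u \<le> f x + e / 2"
      using b(2) by (intro psibar_le_on_interval[OF f, of x b]) (auto intro: less_imp_le)
    then show "psibar f u < psibar f x + e"
      using e unfolding psibar_def by linarith
  qed (use b in simp)
  moreover have "\<forall>\<^sub>F v in at_left x. f v < left_lim f x + e / 2"
    using cadlag_left_lim[OF f] e by (intro order_tendstoD) auto
  then obtain a where a: "a < x" "\<And>v. a < v \<Longrightarrow> v < x \<Longrightarrow> f v < left_lim f x + e / 2"
    unfolding eventually_at_left_field by blast
  have "\<forall>\<^sub>F u in at_left x. psibar f u < psibar f x + e"
    unfolding eventually_at_left_field
  proof (intro exI[of _ a] conjI allI impI)
    fix u assume "a < u" "u < x"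
    then have "psibar f u \<le> left_lim f x + e / 2"
      using a(2) by (intro psibar_le_on_interval[OF f, of a x]) (auto intro: less_imp_le)
    then show "psibar f u < psibar f x + e"
      using e unfolding psibar_def by linarith
  qed (use a in simp)
  ultimately show "\<forall>\<^sub>F u in nhds x. psibar f u < psibar f x + e"
    using e unfolding eventually_nhds_conv_at eventually_at_split by simp
qed

lemma usc_closed_superlevel:
  assumes "usc g"
  shows "closed {u. c \<le> g u}"
proof -
  have "open {u. g u < c}"
  proof (rule openI)
    fix x :: real
    assume "x \<in> {u. g u < c}"
    then have "c - g x > 0"
      by simp
    from assms[unfolded usc_def, rule_format, OF this, of x]
    have "\<forall>\<^sub>F u in nhds x. g u < c"
      by simp
    then obtain d where "d > 0" "\<forall>u. dist u x < d \<longrightarrow> g u < c"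
      unfolding eventually_nhds_metric by blast
    then show "\<exists>d>0. ball x d \<subseteq> {u. g u < c}"
      by (auto simp: dist_commute)
  qed
  moreover have "{u. c \<le> g u} = - {u. g u < c}"
    by auto
  ultimately show ?thesis
    by (simp add: closed_Compl)
qed

lemma usc_diff_continuous:
  assumes "usc g" "\<And>x. isCont h x"
  shows "usc (\<lambda>u. g u - h u)"
  unfolding usc_def
proof (intro allI impI)
  fix x e :: real
  assume e: "e > 0"
  have "\<forall>\<^sub>F u in nhds x. g u < g x + e / 2"
    using assms(1) e unfolding usc_def by simp
  moreover have "(h \<longlongrightarrow> h x) (nhds x)"
    using assms(2)[of x] unfolding isCont_def tendsto_at_iff_tendsto_nhds .
  then have "\<forall>\<^sub>F u in nhds x. h x - e / 2 < h u"
    using e by (intro order_tendstoD) auto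
  ultimately show "\<forall>\<^sub>F u in nhds x. g u - h u < g x - h x + e"
    by eventually_elim linarith
qed

text \<open>An upper semicontinuous function attains its maximum on a compact interval: the
  closed superlevel sets below the supremum M have the finite intersection property.\<close>

lemma usc_attains_max:
  assumes usc: "usc g" and ab: "a \<le> b"
  shows "\<exists>z\<in>{a..b}. \<forall>u\<in>{a..b}. g u \<le> g z"
proof -
  define M where "M = (SUP u\<in>{a..b}. ereal (g u))"
  define K where "K c = {u. c \<le> g u}" for c
  have "{a..b} \<inter> (\<Inter>c\<in>{c. ereal c < M}. K c) \<noteq> {}"
  proof (rule compact_imp_fip_image[OF compact_Icc])
    show "closed (K c)" for c
      unfolding K_def by (rule usc_closed_superlevel[OF usc])
  next
    fix C assume fin: "finite C" and sub: "C \<subseteq> {c. ereal c < M}"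
    show "{a..b} \<inter> (\<Inter>c\<in>C. K c) \<noteq> {}"
    proof (cases "C = {}")
      case True
      then show ?thesis using ab by auto
    next
      case False
      then have "ereal (Max C) < M"
        using fin sub Max_in by blast
      then obtain u where "u \<in> {a..b}" "Max C < g u"
        unfolding M_def less_SUP_iff by auto
      moreover have "c \<le> Max C" if "c \<in> C" for c
        using fin that by simp
      ultimately show ?thesis
        unfolding K_def by force
    qed
  qed
  then obtain z where z: "z \<in> {a..b}" "\<And>c. ereal c < M \<Longrightarrow> c \<le> g z"
    unfolding K_def by blast
  have "g u \<le> g z" if u: "u \<in> {a..b}" for u
  proof (rule ccontr)
    assume less: "\<not> g u \<le> g z"
    then have "ereal ((g z + g u) / 2) < ereal (g u)"
      by simp
    also have "ereal (g u) \<le> M"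
      unfolding M_def using u by (rule SUP_upper)
    finally have "(g z + g u) / 2 \<le> g z"
      by (rule z(2))
    then show False
      using less by simp
  qed
  then show ?thesis
    using z(1) by blast
qed

text \<open>Left and right points of g: the parabola of curvature 1 through (y, g y) dominates g
  weakly to the left, resp. strictly to the right, of y.\<close>

definition left_point :: "(real \<Rightarrow> real) \<Rightarrow> real \<Rightarrow> bool" where
  "left_point g y \<longleftrightarrow> (\<forall>x>0. g (y - x) - g y \<le> x\<^sup>2 / 2)"

definition right_point :: "(real \<Rightarrow> real) \<Rightarrow> real \<Rightarrow> bool" where
  "right_point g y \<longleftrightarrow> (\<forall>x>0. g (y + x) - g y < x\<^sup>2 / 2)"

text \<open>For upper semicontinuous g the left points form a closed set: pass to the limit in
  the defining inequality along a sequence of left points, shifting the increment so that the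
  point y - x being compared stays fixed.\<close>

lemma closed_left_points:
  assumes usc: "usc g"
  shows "closed {y. left_point g y}"
  unfolding closed_sequential_limits
proof (intro allI impI, elim conjE)
  fix ys :: "nat \<Rightarrow> real" and y :: real
  assume left: "\<forall>n. ys n \<in> {y. left_point g y}" and lim: "ys \<longlonglongrightarrow> y"
  have "g (y - x) - g y \<le> x\<^sup>2 / 2" if x: "x > 0" for x
  proof (rule field_le_epsilon)
    fix e :: real
    assume e: "e > 0"
    have shift: "(\<lambda>n. x + (ys n - y)) \<longlonglongrightarrow> x"
      using lim by (intro tendsto_eq_intros) auto
    have "\<forall>\<^sub>F n in sequentially. g (ys n) < g y + e"
      using eventually_compose_filterlim[OF _ lim] usc e unfolding usc_def by blast
    moreover have "\<forall>\<^sub>F n in sequentially. 0 < x + (ys n - y)"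
      using shift x by (rule order_tendstoD)
    ultimately have "\<forall>\<^sub>F n in sequentially. g (y - x) - g y - e \<le> (x + (ys n - y))\<^sup>2 / 2"
    proof eventually_elim
      case (elim n)
      then have "g (ys n - (x + (ys n - y))) - g (ys n) \<le> (x + (ys n - y))\<^sup>2 / 2"
        using left unfolding left_point_def by blast
      then show ?case
        using elim by simp
    qed
    moreover have "(\<lambda>n. (x + (ys n - y))\<^sup>2 / 2) \<longlonglongrightarrow> x\<^sup>2 / 2"
      using shift by (auto intro!: tendsto_intros)
    ultimately have "g (y - x) - g y - e \<le> x\<^sup>2 / 2"
      using tendsto_lowerbound by (metis trivial_limit_sequentially)
    then show "g (y - x) - g y \<le> x\<^sup>2 / 2 + e"
      by simp
  qed
  then show "y \<in> {y. left_point g y}"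
    unfolding left_point_def by simp
qed

text \<open>If q is a left point and z > q maximises g(u) - (u - q)^2/2 over [q, z], then z is a
  left point: on [q, z] this is the maximising property, to the left of q use that q is a left
  point.\<close>

lemma parabola_maximiser_left_point:
  assumes left: "left_point g q" and qz: "q < z"
    and max: "\<And>u. q \<le> u \<Longrightarrow> u \<le> z \<Longrightarrow> g u - (u - q)\<^sup>2 / 2 \<le> g z - (z - q)\<^sup>2 / 2"
  shows "left_point g z"
  unfolding left_point_def
proof (intro allI impI)
  fix x :: real
  assume x: "x > 0"
  show "g (z - x) - g z \<le> x\<^sup>2 / 2"
  proof (cases "q \<le> z - x")
    case True
    have "g (z - x) - g z \<le> ((z - x - q)\<^sup>2 - (z - q)\<^sup>2) / 2"
      using max[OF True] x by simp
    also have "(z - x - q)\<^sup>2 - (z - q)\<^sup>2 = x\<^sup>2 - 2 * x * (z - q)"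
      by (simp add: power2_eq_square algebra_simps)
    also have "\<dots> \<le> x\<^sup>2"
      using x qz by simp
    finally show ?thesis
      by simp
  next
    case False
    have "q - (z - x) > 0"
      using False by simp
    then have "g (q - (q - (z - x))) - g q \<le> (q - (z - x))\<^sup>2 / 2"
      using left unfolding left_point_def by blast
    then have "g (z - x) - g q \<le> (q - (z - x))\<^sup>2 / 2"
      by simp
    moreover have "g q \<le> g z - (z - q)\<^sup>2 / 2"
      using max[of q] qz by simp
    moreover have "(q - (z - x))\<^sup>2 \<le> x\<^sup>2"
      using False qz by (intro power_mono) linarith+
    moreover have "0 \<le> (z - q)\<^sup>2"
      by simp
    ultimately show ?thesis
      by linarith
  qed
qed

lemma right_point_beats_parabola:
  assumes right: "right_point g y" and "q \<le> y" "y < z"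
  shows "g z - (z - q)\<^sup>2 / 2 < g y - (y - q)\<^sup>2 / 2"
proof -
  have "z - y > 0"
    using assms(3) by simp
  then have "g (y + (z - y)) - g y < (z - y)\<^sup>2 / 2"
    using right unfolding right_point_def by blast
  moreover have "(z - q)\<^sup>2 - (y - q)\<^sup>2 = (z - y)\<^sup>2 + 2 * ((z - y) * (y - q))"
    by (simp add: power2_eq_square algebra_simps)
  moreover have "0 \<le> (z - y) * (y - q)"
    using assms(2,3) by simp
  ultimately show ?thesis
    by simp
qed

lemma left_point_past_failure:
  assumes usc: "usc g" and left: "left_point g q" and x: "x > 0"
    and fail: "x\<^sup>2 / 2 \<le> g (q + x) - g q"
  shows "\<exists>z. q < z \<and> left_point g z \<and>
           (\<forall>u. q \<le> u \<longrightarrow> u \<le> z \<longrightarrow> g u - (u - q)\<^sup>2 / 2 \<le> g z - (z - q)\<^sup>2 / 2)"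
proof -
  define G where "G u = g u - (u - q)\<^sup>2 / 2" for u
  have Gqx: "G q \<le> G (q + x)"
    using fail by (simp add: G_def)
  have "isCont (\<lambda>u. (u - q)\<^sup>2 / 2) u" for u
    by (auto intro!: continuous_intros)
  then have "usc G"
    unfolding G_def by (rule usc_diff_continuous[OF usc])
  then obtain z0 where z0: "z0 \<in> {q..q + x}" "\<And>u. u \<in> {q..q + x} \<Longrightarrow> G u \<le> G z0"
    using usc_attains_max[of G q "q + x"] x by auto
  txt \<open>If the maximum is attained at q, it is also attained at q + x.\<close>
  define z where "z = (if z0 = q then q + x else z0)"
  have qz: "q < z"
    using z0(1) x by (auto simp: z_def)
  have zmax: "G u \<le> G z" if "q \<le> u" "u \<le> z" for u
    using z0 Gqx that x by (fastforce simp: z_def)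
  then have "left_point g z"
    using parabola_maximiser_left_point[OF left qz] unfolding G_def by blast
  then show ?thesis
    using qz zmax unfolding G_def by blast
qed

text \<open>The sandwich lemma: between a left point p and a right point y \<ge> p there is a point
  that is both, namely the largest left point in [p, y].\<close>

lemma left_right_point_between:
  assumes usc: "usc g" and py: "p \<le> y"
    and left: "left_point g p" and right: "right_point g y"
  shows "\<exists>q. p \<le> q \<and> q \<le> y \<and> left_point g q \<and> right_point g q"
proof -
  define S where "S = {p..y} \<inter> {q. left_point g q}"
  define q where "q = Sup S"
  have "q \<in> S"
    unfolding q_def
  proof (rule closed_contains_Sup)
    show "S \<noteq> {}" "bdd_above S"
      using py left by (auto simp: S_def)
    show "closed S"
      unfolding S_def by (intro closed_Int closed_left_points[OF usc] closed_atLeastAtMost)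
  qed
  then have q: "p \<le> q" "q \<le> y" "left_point g q"
    by (auto simp: S_def)
  have beyond_q: "z \<le> q" if "z \<in> S" for z
    unfolding q_def using that by (intro cSup_upper) (auto simp: S_def)
  have "right_point g q"
    unfolding right_point_def
  proof (intro allI impI)
    fix x :: real
    assume x: "x > 0"
    show "g (q + x) - g q < x\<^sup>2 / 2"
    proof (rule ccontr)
      assume "\<not> g (q + x) - g q < x\<^sup>2 / 2"
      then obtain z where z: "q < z" "left_point g z"
        and zmax: "\<And>u. q \<le> u \<Longrightarrow> u \<le> z \<Longrightarrow> g u - (u - q)\<^sup>2 / 2 \<le> g z - (z - q)\<^sup>2 / 2"
        using left_point_past_failure[OF usc q(3) x] by force
      show False
      proof (cases "z \<le> y")
        case True
        then show False
          using beyond_q[of z] z q by (simp add: S_def)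
      next
        case False
        then show False
          using right_point_beats_parabola[OF right q(2), of z] zmax[of y] q by simp
      qed
    qed
  qed
  then show ?thesis
    using q by blast
qed

text \<open>If the infimum of the nonnegative left points is at most y, it is attained by a left
  point in [0, y], because that set of left points is closed.\<close>

lemma left_point_below_Inf:
  assumes usc: "usc g" and below: "Inf (ereal ` {p. 0 \<le> p \<and> left_point g p}) \<le> ereal y"
  shows "\<exists>p. 0 \<le> p \<and> p \<le> y \<and> left_point g p"
proof -
  define A where "A = {p. 0 \<le> p \<and> left_point g p}"
  have below_A: "Inf (ereal ` A) \<le> ereal y"
    using below by (simp add: A_def)
  then have nonempty: "A \<noteq> {}"
    by (auto simp: top_ereal_def)
  have bounded: "bdd_below A"
    unfolding A_def by (rule bdd_belowI[of _ 0]) simp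
  have "A = {0..} \<inter> {p. left_point g p}"
    by (auto simp: A_def)
  then have "closed A"
    using closed_left_points[OF usc] by (simp add: closed_Int)
  then have "Inf A \<in> A"
    using closed_contains_Inf nonempty bounded by blast
  moreover have "Inf A \<le> y"
    using below_A ereal_Inf'[OF bounded nonempty] by (metis ereal_less_eq(3))
  ultimately show ?thesis
    unfolding A_def by blast
qed

theorem lemma5p2:
  fixes psi0 :: "real \<Rightarrow> real"
  assumes "cadlag psi0"
    and "((\<lambda>x. psi0 x / x\<^sup>2) \<longlongrightarrow> 0) at_infinity"
  shows "s_pt psi0 = t_pt psi0"
proof -
  define g where "g = psibar psi0"
  have usc: "usc g"
    unfolding g_def by (rule usc_psibar[OF assms(1)])
  have r: "r_pt psi0 = Inf (ereal ` {p. 0 \<le> p \<and> left_point g p})"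
    unfolding r_pt_def left_point_def g_def ..
  have s: "s_pt psi0 = Inf (ereal ` {y. r_pt psi0 \<le> ereal y \<and> right_point g y})"
    unfolding s_pt_def right_point_def g_def ..
  have t: "t_pt psi0 = Inf (ereal ` {q. 0 \<le> q \<and> left_point g q \<and> right_point g q})"
    unfolding t_pt_def left_point_def right_point_def g_def by (rule arg_cong[where f=Inf]) auto
  have "s_pt psi0 \<le> t_pt psi0"
    unfolding s t r by (intro Inf_superset_mono image_mono) (auto intro: Inf_lower)
  moreover have "t_pt psi0 \<le> s_pt psi0"
    unfolding s t
  proof (intro Inf_greatest, elim imageE CollectE conjE)
    fix y and e :: ereal
    assume e: "e = ereal y" and ry: "r_pt psi0 \<le> ereal y" and right: "right_point g y"
    obtain p where p: "0 \<le> p" "p \<le> y" "left_point g p"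
      using left_point_below_Inf[OF usc] ry unfolding r by blast
    then obtain q where "p \<le> q" "q \<le> y" "left_point g q" "right_point g q"
      using left_right_point_between[OF usc p(2,3) right] by blast
    then have "0 \<le> q" "q \<le> y" "left_point g q" "right_point g q"
      using p(1) by simp_all
    then have "Inf (ereal ` {q. 0 \<le> q \<and> left_point g q \<and> right_point g q}) \<le> ereal q"
      by (intro Inf_lower) blast
    also have "\<dots> \<le> e"
      using \<open>q \<le> y\<close> e by simp
    finally show "Inf (ereal ` {q. 0 \<le> q \<and> left_point g q \<and> right_point g q}) \<le> e" .
  qed
  ultimately show ?thesis
    by (rule antisym)
qed

end
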